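(* Let $G$ be a finite group (written additively, not necessarily abelian), let $f:G\to G$, and let $S\subseteq G$ with $\#S=k\ge u(f)$. For each function $g:G\to G$ satisfying (a) $\mathrm{Im}(g)=S$ and (b) $g(x)\ne g(y)$ whenever $x\ne y$ and $f(x)=f(y)$, let $\mathcal{A}_g=\{(r,c)\in G\times \mathrm{Im}(f): \exists x\in G \text{ with } f(x)=c,\ g(x)+f(x)=r\}$. Then $g\mapsto \mathcal{A}_g$ maps the set of functions satisfying (a) and (b) onto the set of all admissible subtables of $M_f$ with value set $S$, and each admissible subtable with value set $S$ is the image of exactly $\prod_{t=1}^{u(f)} (t!)^{\#P_t}$ such functions $g$. Moreover, if two such functions $g,h$ have $\mathcal{A}_g=\mathcal{A}_h$, then $\mathrm{Im}(g)=\mathrm{Im}(h)$ and $\mathrm{Im}(g+f)=\mathrm{Im}(h+f)$.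
   Context: For $f:G\to G$: $\mathrm{Im}(f)=\{f(x):x\in G\}$; $\mathrm{Preim}(f,b)=\{x\in G: f(x)=b\}$; $u(f)=\max_{b\in G}\#\mathrm{Preim}(f,b)$; for $0\le t\le u(f)$, $P_t=\{b\in G:\#\mathrm{Preim}(f,b)=t\}$. The subtraction table $M_f$ has rows indexed by $G$ and columns indexed by $\mathrm{Im}(f)$, with entry $m_{r,c}=r-c$ (i.e. $r+(-c)$) in position $(r,c)$. A subtable is any set $\mathcal{A}$ of positions $(r,c)\in G\times\mathrm{Im}(f)$ (the entry at that position being $m_{r,c}$). A subtable $\mathcal{A}$ is an admissible subtable with value set $S$ if (A1) $\{m_{r,c}:(r,c)\in\mathcal{A}\}=S$, and (A2) for every $c\in\mathrm{Im}(f)$ there are exactly $\#\mathrm{Preim}(f,c)$ elements $r\in G$ with $(r,c)\in\mathcal{A}$. Functions $g+f$ are taken pointwise. *)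

theory Defs
  imports Main
begin

definition Preim :: "('a \<Rightarrow> 'a) \<Rightarrow> 'a \<Rightarrow> 'a set" where
  "Preim f b = {x. f x = b}"

definition u :: "('a::finite \<Rightarrow> 'a) \<Rightarrow> nat" where
  "u f = Max ((\<lambda>b. card (Preim f b)) ` UNIV)"

definition P :: "('a::finite \<Rightarrow> 'a) \<Rightarrow> nat \<Rightarrow> 'a set" where
  "P f t = {b. card (Preim f b) = t}"

text \<open>Entry of the subtraction table at position (r,c).\<close>
definition m :: "'a::group_add \<Rightarrow> 'a \<Rightarrow> 'a" where
  "m r c = r - c"

definition admissible :: "('a::{group_add,finite} \<Rightarrow> 'a) \<Rightarrow> ('a \<times> 'a) set \<Rightarrow> 'a set \<Rightarrow> bool" where
  "admissible f A S \<longleftrightarrow>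
     A \<subseteq> UNIV \<times> range f \<and>
     (\<lambda>(r, c). m r c) ` A = S \<and>
     (\<forall>c\<in>range f. card {r. (r, c) \<in> A} = card (Preim f c))"

definition good :: "('a \<Rightarrow> 'a) \<Rightarrow> 'a set \<Rightarrow> ('a \<Rightarrow> 'a) \<Rightarrow> bool" where
  "good f S g \<longleftrightarrow> range g = S \<and> (\<forall>x y. x \<noteq> y \<and> f x = f y \<longrightarrow> g x \<noteq> g y)"

definition Ag :: "('a::group_add \<Rightarrow> 'a) \<Rightarrow> ('a \<Rightarrow> 'a) \<Rightarrow> ('a \<times> 'a) set" where
  "Ag f g = {(r, c). c \<in> range f \<and> (\<exists>x. f x = c \<and> g x + f x = r)}"

end

theory Submission
  imports Defs "HOL-Library.FuncSet"
begin

(* In column c of M_f the subtable A_g consists of the rows g x + c with f x = c, so its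
   entries there are exactly the values of g on the fibre of c. Hence a function g satisfying
   (a) and (b) with A_g = A amounts to choosing, for every c in Im f, a bijection from the
   fibre of c onto the entries of A in column c; condition (A2) makes these two sets
   equinumerous, so there are prod_c (#Preim(f,c))! such g, and grouping the fibres by their
   size t gives prod_t (t!)^#P_t. Both Im g and Im (g + f) can be read off A_g: the former
   as its set of entries, the latter as its set of rows. *)

lemma card_PiE_inj_on_times_fact:
  assumes "finite X" "finite T" "card X \<le> card T"
  shows "card {h \<in> X \<rightarrow>\<^sub>E T. inj_on h X} * fact (card T - card X) = fact (card T)"
  using assms
proof (induction X arbitrary: T rule: finite_induct)
  case empty
  then show ?case by (simp add: PiE_empty_domain)
next
  case (insert x X)
  let ?inj = "\<lambda>Y. {h \<in> X \<rightarrow>\<^sub>E Y. inj_on h X}"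
  let ?Sig = "Sigma T (\<lambda>y. ?inj (T - {y}))"
  let ?extend = "\<lambda>(y, h). h(x := y)"
  have IH: "card (?inj (T - {y})) * fact (card T - card (insert x X)) = fact (card T - 1)"
    if "y \<in> T" for y
    using that insert.prems insert.hyps insert.IH[of "T - {y}"] by simp
  have Sigma_eq: "{(y, h). y \<in> T \<and> h \<in> X \<rightarrow>\<^sub>E (T - {y}) \<and> inj_on h X} = ?Sig"
    by auto
  have "{h \<in> insert x X \<rightarrow>\<^sub>E T. inj_on h (insert x X)} = ?extend ` ?Sig"
    using extensional_funcset_extend_domain_inj_on_eq[OF insert.hyps(2), of T] Sigma_eq by simp
  moreover have "inj_on ?extend ?Sig"
    using extensional_funcset_extend_domain_inj_onI[OF insert.hyps(2), of T] Sigma_eq by simp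
  moreover have "finite (?inj (T - {y}))" for y
    using insert.hyps(1) insert.prems(1)
    by (auto intro: finite_subset[OF _ finite_PiE[of X "\<lambda>_. T - {y}"]])
  ultimately have "card {h \<in> insert x X \<rightarrow>\<^sub>E T. inj_on h (insert x X)}
      = (\<Sum>y\<in>T. card (?inj (T - {y})))"
    using insert.prems(1) by (simp add: card_image card_SigmaI)
  then have "card {h \<in> insert x X \<rightarrow>\<^sub>E T. inj_on h (insert x X)}
      * fact (card T - card (insert x X)) = card T * fact (card T - 1)"
    using IH by (simp add: sum_distrib_right)
  also have "\<dots> = fact (card T)"
    using insert by (cases "card T") auto
  finally show ?case .
qed

lemma card_PiE_bij_betw:
  assumes "finite X" "finite T" "card X = card T"
  shows "card {h \<in> X \<rightarrow>\<^sub>E T. bij_betw h X T} = fact (card X)"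
proof -
  have "bij_betw h X T \<longleftrightarrow> inj_on h X" if "h \<in> X \<rightarrow> T" for h
    using that assms by (metis bij_betw_def card_image card_subset_eq image_subset_iff_funcset)
  then have "{h \<in> X \<rightarrow>\<^sub>E T. bij_betw h X T} = {h \<in> X \<rightarrow>\<^sub>E T. inj_on h X}"
    by (auto simp: PiE_def)
  then show ?thesis
    using card_PiE_inj_on_times_fact[OF assms(1,2)] assms(3) by simp
qed

lemma card_fibrewise_bij_betw:
  fixes f :: "'a::finite \<Rightarrow> 'b" and T :: "'b \<Rightarrow> 'c set"
  assumes "\<And>c. c \<in> range f \<Longrightarrow> finite (T c)"
    and "\<And>c. c \<in> range f \<Longrightarrow> card (T c) = card (f -` {c})"
  shows "card {g. \<forall>c\<in>range f. bij_betw g (f -` {c}) (T c)}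
    = (\<Prod>c\<in>range f. fact (card (f -` {c})))"
proof -
  let ?G = "{g. \<forall>c\<in>range f. bij_betw g (f -` {c}) (T c)}"
  define B where "B c = {h \<in> f -` {c} \<rightarrow>\<^sub>E T c. bij_betw h (f -` {c}) (T c)}" for c
  let ?restrict = "\<lambda>g. \<lambda>c\<in>range f. restrict g (f -` {c})"
  let ?glue = "\<lambda>F x. F (f x) x"
  have "bij_betw ?restrict ?G (\<Pi>\<^sub>E c\<in>range f. B c)"
  proof (rule bij_betw_byWitness[where f' = ?glue])
    show "\<forall>F\<in>\<Pi>\<^sub>E c\<in>range f. B c. ?restrict (?glue F) = F"
      by (fastforce simp: B_def PiE_iff extensional_def fun_eq_iff)
    show "?glue ` (\<Pi>\<^sub>E c\<in>range f. B c) \<subseteq> ?G"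
    proof clarify
      fix F c
      assume "F \<in> (\<Pi>\<^sub>E c\<in>range f. B c)"
      then have "bij_betw (F (f c)) (f -` {f c}) (T (f c))"
        by (auto simp: B_def)
      then show "bij_betw (?glue F) (f -` {f c}) (T (f c))"
        by (subst bij_betw_cong) auto
    qed
    show "?restrict ` ?G \<subseteq> (\<Pi>\<^sub>E c\<in>range f. B c)"
    proof (rule image_subsetI)
      fix g
      assume g: "g \<in> ?G"
      have "restrict g (f -` {c}) \<in> B c" if "c \<in> range f" for c
      proof -
        have "bij_betw g (f -` {c}) (T c)"
          using g that by blast
        then show ?thesis
          by (simp add: B_def restrict_PiE_iff bij_betw_apply)
      qed
      then show "?restrict g \<in> (\<Pi>\<^sub>E c\<in>range f. B c)"
        by (simp add: restrict_PiE_iff)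
    qed
  qed auto
  then have "card ?G = (\<Prod>c\<in>range f. card (B c))"
    by (simp add: bij_betw_same_card card_PiE)
  also have "\<dots> = (\<Prod>c\<in>range f. fact (card (f -` {c})))"
    using assms by (intro prod.cong) (simp_all add: B_def card_PiE_bij_betw)
  finally show ?thesis .
qed

lemma Preim_eq_vimage: "Preim f c = f -` {c}"
  by (auto simp: Preim_def)

lemma Preim_notin_range: "c \<notin> range f \<Longrightarrow> Preim f c = {}"
  by (auto simp: Preim_def)

lemma range_eq_UN_image_Preim: "range g = (\<Union>c\<in>range f. g ` Preim f c)"
  by (auto simp: Preim_def)

lemma prod_fact_card_Preim:
  fixes f :: "'a::finite \<Rightarrow> 'a"
  shows "(\<Prod>c\<in>range f. fact (card (Preim f c)) :: nat)
    = (\<Prod>t = 1..u f. fact t ^ card (P f t))"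
proof -
  have "(\<Prod>c\<in>range f. fact (card (Preim f c)) :: nat)
      = (\<Prod>c\<in>UNIV. fact (card (Preim f c)))"
    by (intro prod.mono_neutral_left) (simp_all add: Preim_notin_range)
  also have "\<dots> = (\<Prod>t = 0..u f. fact t ^ card (P f t))"
    using prod.group[where S = UNIV and T = "{0..u f}" and g = "\<lambda>c. card (Preim f c)"
        and h = "\<lambda>c. fact (card (Preim f c)) :: nat"]
    by (simp add: P_def u_def image_subset_iff)
  also have "\<dots> = (\<Prod>t = 1..u f. fact t ^ card (P f t))"
    by (simp add: prod.atLeast_Suc_atMost)
  finally show ?thesis .
qed

definition column_entries :: "('a::group_add \<times> 'a) set \<Rightarrow> 'a \<Rightarrow> 'a set" where
  "column_entries A c = {m r c | r. (r, c) \<in> A}"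

lemma mem_column_entries_iff: "x \<in> column_entries A c \<longleftrightarrow> (x + c, c) \<in> A"
  by (auto simp: column_entries_def m_def) (metis add_diff_cancel)

lemma card_column_entries: "card (column_entries A c) = card {r. (r, c) \<in> A}"
proof -
  have "column_entries A c = (\<lambda>r. r - c) ` {r. (r, c) \<in> A}"
    by (auto simp: column_entries_def m_def)
  then show ?thesis
    by (simp add: card_image inj_on_def)
qed

lemma image_m_eq_UN_column_entries:
  assumes "A \<subseteq> UNIV \<times> C"
  shows "(\<lambda>(r, c). m r c) ` A = (\<Union>c\<in>C. column_entries A c)"
  using assms by (auto simp: column_entries_def)

lemma subtable_eqI:
  assumes "A \<subseteq> UNIV \<times> C" "B \<subseteq> UNIV \<times> C"
    and "\<And>c. c \<in> C \<Longrightarrow> column_entries A c = column_entries B c"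
  shows "A = B"
proof -
  have "(r, c) \<in> A \<longleftrightarrow> (r, c) \<in> B" for r c
  proof (cases "c \<in> C")
    case True
    then show ?thesis
      using assms(3) mem_column_entries_iff[of "r - c" _ c] by (metis diff_add_cancel)
  next
    case False
    then show ?thesis
      using assms(1,2) by auto
  qed
  then show ?thesis
    by auto
qed

lemma good_iff_inj_on_Preim: "good f S g \<longleftrightarrow> range g = S \<and> (\<forall>c. inj_on g (Preim f c))"
  unfolding good_def inj_on_def Preim_def by blast

lemma Ag_subset: "Ag f g \<subseteq> UNIV \<times> range f"
  by (auto simp: Ag_def)

lemma column_entries_Ag: "column_entries (Ag f g) c = g ` Preim f c"
  by (auto simp: mem_column_entries_iff Ag_def Preim_def)

lemma range_add_eq_fst_Ag: "range (\<lambda>x. g x + f x) = fst ` Ag f g"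
proof
  show "range (\<lambda>x. g x + f x) \<subseteq> fst ` Ag f g"
    by (auto simp: Ag_def intro!: rev_image_eqI)
  show "fst ` Ag f g \<subseteq> range (\<lambda>x. g x + f x)"
    unfolding Ag_def by (clarsimp simp: image_iff) (metis)
qed

lemma Ag_admissible:
  fixes f :: "'a::{group_add,finite} \<Rightarrow> 'a"
  assumes "good f S g"
  shows "admissible f (Ag f g) S"
proof -
  have inj: "inj_on g (Preim f c)" and range: "range g = S" for c
    using assms by (simp_all add: good_iff_inj_on_Preim)
  have "(\<lambda>(r, c). m r c) ` Ag f g = (\<Union>c\<in>range f. g ` Preim f c)"
    by (simp add: image_m_eq_UN_column_entries[OF Ag_subset] column_entries_Ag)
  also have "\<dots> = S"
    using range range_eq_UN_image_Preim[of g f] by simp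
  finally have "(\<lambda>(r, c). m r c) ` Ag f g = S" .
  moreover have "card {r. (r, c) \<in> Ag f g} = card (Preim f c)" for c
    using card_column_entries[of "Ag f g" c] inj by (simp add: column_entries_Ag card_image)
  ultimately show ?thesis
    using Ag_subset by (simp add: admissible_def)
qed

lemma good_Ag_eq_iff:
  fixes f :: "'a::{group_add,finite} \<Rightarrow> 'a"
  assumes "admissible f A S"
  shows "good f S g \<and> Ag f g = A
    \<longleftrightarrow> (\<forall>c\<in>range f. bij_betw g (Preim f c) (column_entries A c))"
proof
  assume "good f S g \<and> Ag f g = A"
  then show "\<forall>c\<in>range f. bij_betw g (Preim f c) (column_entries A c)"
    by (auto simp: bij_betw_def good_iff_inj_on_Preim column_entries_Ag)
next
  assume bij: "\<forall>c\<in>range f. bij_betw g (Preim f c) (column_entries A c)"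
  have A: "A \<subseteq> UNIV \<times> range f" and entries: "(\<lambda>(r, c). m r c) ` A = S"
    using assms by (simp_all add: admissible_def)
  have "Ag f g = A"
    using bij
    by (intro subtable_eqI[OF Ag_subset A]) (auto simp: column_entries_Ag bij_betw_def)
  moreover have "range g = S"
    using bij entries range_eq_UN_image_Preim[of g f]
    by (simp add: image_m_eq_UN_column_entries[OF A] bij_betw_def)
  moreover have "inj_on g (Preim f c)" for c
    using bij by (cases "c \<in> range f") (auto simp: bij_betw_def Preim_notin_range)
  ultimately show "good f S g \<and> Ag f g = A"
    by (simp add: good_iff_inj_on_Preim)
qed

lemma card_good_Ag_eq:
  fixes f :: "'a::{group_add,finite} \<Rightarrow> 'a"
  assumes "admissible f A S"
  shows "card {g. good f S g \<and> Ag f g = A} = (\<Prod>c\<in>range f. fact (card (Preim f c)))"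
proof -
  have "card (column_entries A c) = card (f -` {c})" if "c \<in> range f" for c
    using assms that by (auto simp: admissible_def card_column_entries Preim_eq_vimage)
  then show ?thesis
    using card_fibrewise_bij_betw[of f "column_entries A"]
    by (simp add: good_Ag_eq_iff[OF assms] Preim_eq_vimage)
qed

theorem lemma2p1:
  fixes f :: "'a::{group_add,finite} \<Rightarrow> 'a" and S :: "'a set"
  assumes "card S \<ge> u f"
  shows "Ag f ` {g. good f S g} = {A. admissible f A S}
    \<and> (\<forall>A. admissible f A S \<longrightarrow>
          card {g. good f S g \<and> Ag f g = A} = (\<Prod>t = 1..u f. fact t ^ card (P f t)))
    \<and> (\<forall>g h. good f S g \<and> good f S h \<and> Ag f g = Ag f h \<longrightarrow>
          range g = range h \<and> range (\<lambda>x. g x + f x) = range (\<lambda>x. h x + f x))"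
proof (intro conjI allI impI)
  show "Ag f ` {g. good f S g} = {A. admissible f A S}"
  proof
    show "Ag f ` {g. good f S g} \<subseteq> {A. admissible f A S}"
      using Ag_admissible by blast
    show "{A. admissible f A S} \<subseteq> Ag f ` {g. good f S g}"
    proof
      fix A
      assume "A \<in> {A. admissible f A S}"
      then have "card {g. good f S g \<and> Ag f g = A} \<noteq> 0"
        by (simp add: card_good_Ag_eq)
      then obtain g where "good f S g" "Ag f g = A"
        by (metis (mono_tags, lifting) card.empty empty_Collect_eq)
      then show "A \<in> Ag f ` {g. good f S g}"
        by blast
    qed
  qed
next
  fix A
  assume "admissible f A S"
  then show "card {g. good f S g \<and> Ag f g = A} = (\<Prod>t = 1..u f. fact t ^ card (P f t))"
    by (simp add: card_good_Ag_eq prod_fact_card_Preim)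
next
  fix g h
  assume "good f S g \<and> good f S h \<and> Ag f g = Ag f h"
  then show "range g = range h" "range (\<lambda>x. g x + f x) = range (\<lambda>x. h x + f x)"
    by (simp_all add: good_def range_add_eq_fst_Ag)
qed

end
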